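(* Suppose each interface function $g_k$ belongs to $C^2[0,L_x]$ and $\varepsilon$ is piecewise constant (constant on each $\Omega_k$). Then there is a constant $C_9>0$ independent of $h$ such that $$\sum_{j=1}^{S}\operatorname{meas}\big(\operatorname{supp}_{S_j}|\varepsilon-\varepsilon_h|\big)\le C_9 h.$$
   Context: $H,L_x>0$, $\Omega=(0,L_x)\times(-H,H)$. There are $I\ge1$ interfaces given by $g_k:[0,L_x]\to\mathbb R$ ($k=1,\dots,I$) whose graphs are separated from each other and from $x_2=\pm H$ by some $\delta>0$; $\Omega_k$ ($k=1,\dots,I+1$) is the region of $\Omega$ between the graphs of $g_{k-1}$ and $g_k$ ($g_0\equiv -H$, $g_{I+1}\equiv H$). $\varepsilon:\Omega\to\mathbb C$ is the relative permittivity. Slices: $-H=h_0<h_1<\dots<h_S=H$, $S_j=\{(x_1,x_2)\in\Omega:h_{j-1}\le x_2<h_j\}$, $\Delta h_j=h_j-h_{j-1}$, $h=\max_j\Delta h_j$, with $h/\min_j\Delta h_j\le C_\Delta$ for a fixed constant $C_\Delta>0$, and every point where $g_k'=0$ lies on an inter-slice line $x_2=h_j$. The stairstep approximation is $\varepsilon_h(x_1,x_2)=\varepsilon(x_1,h_{j-1/2})$ on $S_j$, $h_{j-1/2}=(h_{j-1}+h_j)/2$. $\operatorname{supp}_{S_j}|\varepsilon-\varepsilon_h|$ is the set of points of $S_j$ where $\varepsilon\ne\varepsilon_h$, and meas is Lebesgue measure. *)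

theory Defs
  imports "HOL-Analysis.Analysis"
begin

definition Omega :: "real \<Rightarrow> real \<Rightarrow> (real \<times> real) set" where
  "Omega Lx H = {0<..<Lx} \<times> {-H<..<H}"

definition gext :: "real \<Rightarrow> nat \<Rightarrow> (nat \<Rightarrow> real \<Rightarrow> real) \<Rightarrow> nat \<Rightarrow> real \<Rightarrow> real" where
  "gext H I g k x = (if k = 0 then -H else if k = I + 1 then H else g k x)"

definition layer :: "real \<Rightarrow> real \<Rightarrow> nat \<Rightarrow> (nat \<Rightarrow> real \<Rightarrow> real) \<Rightarrow> nat \<Rightarrow> (real \<times> real) set" where
  "layer Lx H I g k = {p \<in> Omega Lx H. gext H I g (k - 1) (fst p) < snd p \<and> snd p < gext H I g k (fst p)}"

definition slice :: "real \<Rightarrow> real \<Rightarrow> (nat \<Rightarrow> real) \<Rightarrow> nat \<Rightarrow> (real \<times> real) set" where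
  "slice Lx H hs j = {p \<in> Omega Lx H. hs (j - 1) \<le> snd p \<and> snd p < hs j}"

text \<open>Stairstep approximation: eps_h(x1,x2) = eps(x1, h_(j-1/2)) on S_j
  (value 0 outside the union of the slices, which is irrelevant).\<close>
definition eps_h :: "real \<Rightarrow> real \<Rightarrow> (nat \<Rightarrow> real) \<Rightarrow> nat \<Rightarrow> (real \<times> real \<Rightarrow> complex) \<Rightarrow> real \<times> real \<Rightarrow> complex" where
  "eps_h Lx H hs S eps p =
     (if \<exists>j\<in>{1..S}. p \<in> slice Lx H hs j
      then eps (fst p, (hs ((THE j. j \<in> {1..S} \<and> p \<in> slice Lx H hs j) - 1)
                       + hs (THE j. j \<in> {1..S} \<and> p \<in> slice Lx H hs j)) / 2)
      else 0)"

definition supp_diff :: "real \<Rightarrow> real \<Rightarrow> (nat \<Rightarrow> real) \<Rightarrow> nat \<Rightarrow> (real \<times> real \<Rightarrow> complex) \<Rightarrow> nat \<Rightarrow> (real \<times> real) set" where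
  "supp_diff Lx H hs S eps j = {p \<in> slice Lx H hs j. eps p \<noteq> eps_h Lx H hs S eps p}"

definition hmax :: "(nat \<Rightarrow> real) \<Rightarrow> nat \<Rightarrow> real" where
  "hmax hs S = Max ((\<lambda>j. hs j - hs (j - 1)) ` {1..S})"

definition hmin :: "(nat \<Rightarrow> real) \<Rightarrow> nat \<Rightarrow> real" where
  "hmin hs S = Min ((\<lambda>j. hs j - hs (j - 1)) ` {1..S})"

end

theory Submission
  imports Defs
begin

text \<open>On the slice \<open>S_j\<close>, \<open>\<epsilon>\<close> and \<open>\<epsilon>_h\<close> can differ at \<open>(x1, x2)\<close> only if some interface value
  \<open>g_k(x1)\<close> lies in \<open>[h_(j-1), h_j)\<close>: otherwise the vertical segment from \<open>(x1, x2)\<close> to the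
  midpoint \<open>(x1, h_(j-1/2))\<close> stays inside one layer, where \<open>\<epsilon>\<close> is constant. So the support in
  \<open>S_j\<close> is covered by the boxes \<open>{x1. g_k(x1) \<in> [h_(j-1), h_j)} \<times> [h_(j-1), h_j)\<close>, each of
  area at most \<open>h\<close> times the length of its base. For fixed \<open>k\<close> the bases are disjoint subsets
  of \<open>(0, Lx)\<close>, so the total is at most \<open>I Lx h\<close>.\<close>

lemma strict_mono_on_atMostI:
  fixes f :: "nat \<Rightarrow> 'a::order"
  assumes "\<And>j. j \<in> {1..n} \<Longrightarrow> f (j - 1) < f j"
  shows "strict_mono_on {..n} f"
proof (rule strict_mono_onI)
  fix i j assume "i \<in> {..n}" "j \<in> {..n}" "i < j"
  then show "f i < f j"
  proof (induction j)
    case 0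
    then show ?case by simp
  next
    case (Suc j)
    have "f j < f (Suc j)" using assms[of "Suc j"] Suc.prems by auto
    then show ?case using Suc by (cases "i = j") (auto intro: order.strict_trans)
  qed
qed

lemma disjoint_family_on_slabs:
  fixes f :: "nat \<Rightarrow> 'a::linorder"
  assumes "strict_mono_on {..n} f"
  shows "disjoint_family_on (\<lambda>j. {f (j - 1)..<f j}) {1..n}"
proof -
  have "{f (i - 1)..<f i} \<inter> {f (j - 1)..<f j} = {}" if "i \<in> {1..n}" "j \<in> {1..n}" "i < j" for i j
  proof -
    have "f i \<le> f (j - 1)" using strict_mono_on_leD[OF assms] that by auto
    then show ?thesis by auto
  qed
  then show ?thesis unfolding disjoint_family_on_def by (metis Int_commute linorder_neqE_nat)
qed

lemma slab_within_ends:
  fixes f :: "nat \<Rightarrow> 'a::linorder"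
  assumes "strict_mono_on {..n} f" "j \<in> {1..n}"
  shows "f 0 \<le> f (j - 1)" "f (j - 1) < f j" "f j \<le> f n"
  using strict_mono_on_leD[OF assms(1)] strict_mono_onD[OF assms(1)] assms(2) by auto

lemma disjoint_family_on_Int_vimage:
  "disjoint_family_on B I \<Longrightarrow> disjoint_family_on (\<lambda>i. A \<inter> f -` B i) I"
  by (auto simp: disjoint_family_on_def)

lemma ex_crossing_index:
  fixes f :: "nat \<Rightarrow> 'a::linorder"
  assumes "f 0 \<le> y" "y < f n"
  shows "\<exists>k\<in>{1..n}. f (k - 1) \<le> y \<and> y < f k"
  using assms(2)
proof (induction n)
  case 0
  with assms(1) show ?case by simp
next
  case (Suc n)
  show ?case
  proof (cases "y < f n")
    case True
    with Suc.IH show ?thesis by force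
  next
    case False
    with Suc.prems show ?thesis by force
  qed
qed

lemma measure_lebesgue_Times:
  fixes A :: "'a::euclidean_space set" and B :: "'b::euclidean_space set"
  assumes "A \<in> sets borel" "B \<in> sets borel"
  shows "measure lebesgue (A \<times> B) = measure lborel A * measure lborel B"
proof -
  have "A \<times> B \<in> sets (borel :: ('a \<times> 'b) measure)"
    using assms by (simp add: borel_prod[symmetric])
  then have "measure lebesgue (A \<times> B) = measure (lborel \<Otimes>\<^sub>M lborel) (A \<times> B)"
    by (simp add: lborel_prod)
  also have "\<dots> = measure lborel A * measure lborel B"
    using assms by (simp add: measure_def lborel.emeasure_pair_measure_Times enn2real_mult)
  finally show ?thesis .
qed

lemma borel_Int_vimage_if_continuous_on:
  assumes "A \<in> sets borel" "continuous_on A f" "Y \<in> sets borel"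
  shows "A \<inter> f -` Y \<in> sets borel"
proof -
  have "f -` Y \<inter> space (restrict_space borel A) \<in> sets (restrict_space borel A)"
    using borel_measurable_continuous_on_restrict[OF assms(2)] assms(3) by (rule measurable_sets)
  then show ?thesis using assms(1) by (simp add: sets_restrict_space_iff Int_commute)
qed

lemma measure_le_if_subset_fmeasurable:
  assumes "A \<subseteq> B" "B \<in> fmeasurable M"
  shows "measure M A \<le> measure M B"
proof (cases "A \<in> sets M")
  case True
  with assms show ?thesis by (intro measure_mono_fmeasurable)
next
  case False
  then show ?thesis by (simp add: measure_notin_sets)
qed

lemma sum_measure_le_if_disjoint:
  assumes "finite I" "disjoint_family_on A I" "\<And>i. i \<in> I \<Longrightarrow> A i \<in> sets M"
    and "\<And>i. i \<in> I \<Longrightarrow> A i \<subseteq> B" "B \<in> fmeasurable M"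
  shows "(\<Sum>i\<in>I. measure M (A i)) \<le> measure M B"
proof -
  have "emeasure M (A i) \<noteq> \<infinity>" if "i \<in> I" for i
    using fmeasurableI2[OF assms(5) assms(4,3)[OF that]] by (simp add: fmeasurable_def less_top)
  then have "(\<Sum>i\<in>I. measure M (A i)) = measure M (\<Union>i\<in>I. A i)"
    using assms(1-3) by (intro measure_finite_Union[symmetric]) auto
  also have "\<dots> \<le> measure M B"
    using assms(4,5) by (intro measure_le_if_subset_fmeasurable UN_least)
  finally show ?thesis .
qed

lemma sum_measure_crossings_le:
  fixes f :: "real \<Rightarrow> real" and hs :: "nat \<Rightarrow> real"
  assumes "continuous_on {a..b} f" "a \<le> b" "strict_mono_on {..S} hs"
  shows "(\<Sum>j=1..S. measure lborel ({a<..<b} \<inter> f -` {hs (j - 1)..<hs j})) \<le> b - a"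
proof -
  have "disjoint_family_on (\<lambda>j. {a<..<b} \<inter> f -` {hs (j - 1)..<hs j}) {1..S}"
    using disjoint_family_on_slabs[OF assms(3)] by (rule disjoint_family_on_Int_vimage)
  moreover have "continuous_on {a<..<b} f"
    using assms(1) by (rule continuous_on_subset) auto
  then have "{a<..<b} \<inter> f -` {hs (j - 1)..<hs j} \<in> sets lborel" for j
    by (auto intro!: borel_Int_vimage_if_continuous_on)
  ultimately have "(\<Sum>j=1..S. measure lborel ({a<..<b} \<inter> f -` {hs (j - 1)..<hs j}))
      \<le> measure lborel {a..b}"
    using fmeasurable_cbox[of a b] unfolding cbox_interval
    by (intro sum_measure_le_if_disjoint) auto
  also have "\<dots> = b - a" using assms(2) by simp
  finally show ?thesis .
qed

lemma mem_layer_if_off_interfaces: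
  assumes "(x, y) \<in> Omega Lx H" "\<And>k. k \<in> {1..I} \<Longrightarrow> g k x \<noteq> y"
  shows "\<exists>k\<in>{1..I+1}. (x, y) \<in> layer Lx H I g k"
proof -
  have "gext H I g 0 x \<le> y" "y < gext H I g (I + 1) x"
    using assms(1) by (auto simp: gext_def Omega_def)
  then obtain k where k: "k \<in> {1..I+1}" "gext H I g (k - 1) x \<le> y" "y < gext H I g k x"
    using ex_crossing_index[of "\<lambda>k. gext H I g k x"] by blast
  moreover have "gext H I g (k - 1) x \<noteq> y"
  proof (cases "k - 1 = 0")
    case True
    then show ?thesis using assms(1) by (simp add: gext_def Omega_def)
  next
    case False
    with k(1) have "k - 1 \<in> {1..I}" by auto
    then show ?thesis using False assms(2)[of "k - 1"] by (simp add: gext_def)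
  qed
  ultimately have "(x, y) \<in> layer Lx H I g k" using assms(1) by (simp add: layer_def)
  with k(1) show ?thesis by blast
qed

lemma mem_layer_along_gap:
  assumes xy: "(x, y) \<in> layer Lx H I g k" and k: "k \<in> {1..I+1}"
    and gap: "\<And>i. i \<in> {1..I} \<Longrightarrow> g i x \<notin> {a..<b}"
    and "y \<in> {a..<b}" "m \<in> {a..<b}" "m \<in> {-H<..<H}"
  shows "(x, m) \<in> layer Lx H I g k"
proof -
  have "gext H I g (k - 1) x < m"
  proof (cases "k - 1 = 0")
    case True
    then show ?thesis using assms(6) by (simp add: gext_def)
  next
    case False
    with k have "k - 1 \<in> {1..I}" by auto
    then show ?thesis using xy gap[of "k - 1"] assms(4,5) by (auto simp: layer_def gext_def)
  qed
  moreover have "m < gext H I g k x"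
  proof (cases "k = I + 1")
    case True
    then show ?thesis using assms(6) by (simp add: gext_def)
  next
    case False
    with k have "k \<in> {1..I}" by auto
    then show ?thesis using xy gap[of k] assms(4,5) by (auto simp: layer_def gext_def)
  qed
  ultimately show ?thesis using xy assms(6) by (auto simp: layer_def Omega_def)
qed

lemma eps_eq_along_gap:
  assumes "\<forall>k\<in>{1..I+1}. \<forall>p\<in>layer Lx H I g k. eps p = c k"
    and "x \<in> {0<..<Lx}" "\<And>i. i \<in> {1..I} \<Longrightarrow> g i x \<notin> {a..<b}"
    and "y \<in> {a..<b}" "y \<in> {-H<..<H}" "m \<in> {a..<b}" "m \<in> {-H<..<H}"
  shows "eps (x, y) = eps (x, m)"
proof -
  have "(x, y) \<in> Omega Lx H" using assms(2,5) by (simp add: Omega_def)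
  moreover have "g i x \<noteq> y" if "i \<in> {1..I}" for i
    using assms(3)[OF that] assms(4) by auto
  ultimately obtain k where k: "k \<in> {1..I+1}" "(x, y) \<in> layer Lx H I g k"
    using mem_layer_if_off_interfaces by blast
  have "(x, m) \<in> layer Lx H I g k"
    by (rule mem_layer_along_gap[OF k(2) k(1) assms(3) assms(4,6,7)])
  with k assms(1) show ?thesis by auto
qed

lemma eps_h_on_slice:
  assumes "strict_mono_on {..S} hs" "j \<in> {1..S}" "p \<in> slice Lx H hs j"
  shows "eps_h Lx H hs S eps p = eps (fst p, (hs (j - 1) + hs j) / 2)"
proof -
  have "(THE j. j \<in> {1..S} \<and> p \<in> slice Lx H hs j) = j"
  proof (rule the_equality)
    fix i assume i: "i \<in> {1..S} \<and> p \<in> slice Lx H hs i"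
    show "i = j"
    proof (rule ccontr)
      assume "i \<noteq> j"
      with i assms(2) have "{hs (i - 1)..<hs i} \<inter> {hs (j - 1)..<hs j} = {}"
        by (intro disjoint_family_onD[OF disjoint_family_on_slabs[OF assms(1)]]) auto
      moreover have "snd p \<in> {hs (i - 1)..<hs i}" "snd p \<in> {hs (j - 1)..<hs j}"
        using i assms(3) by (simp_all add: slice_def)
      ultimately show False by (metis IntI empty_iff)
    qed
  qed (use assms(2,3) in simp)
  with assms(2,3) show ?thesis unfolding eps_h_def by auto
qed

lemma supp_diff_subset_crossings:
  assumes pw_const: "\<forall>k\<in>{1..I+1}. \<forall>p\<in>layer Lx H I g k. eps p = c k"
    and mono: "strict_mono_on {..S} hs" and "hs 0 = -H" "hs S = H" and j: "j \<in> {1..S}"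
  shows "supp_diff Lx H hs S eps j
    \<subseteq> (\<Union>k\<in>{1..I}. ({0<..<Lx} \<inter> g k -` {hs (j - 1)..<hs j}) \<times> {hs (j - 1)..<hs j})"
proof
  fix p assume p: "p \<in> supp_diff Lx H hs S eps j"
  obtain x y where p_eq: "p = (x, y)" by fastforce
  define m where "m = (hs (j - 1) + hs j) / 2"
  have "-H \<le> hs (j - 1)" "hs (j - 1) < hs j" "hs j \<le> H"
    using slab_within_ends[OF mono j] assms(3,4) by simp_all
  then have m: "m \<in> {hs (j - 1)..<hs j}" "m \<in> {-H<..<H}" by (auto simp: m_def)
  have xy: "x \<in> {0<..<Lx}" "y \<in> {hs (j - 1)..<hs j}" "y \<in> {-H<..<H}"
    using p p_eq by (auto simp: supp_diff_def slice_def Omega_def)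
  have "eps (x, y) \<noteq> eps (x, m)"
    using p p_eq eps_h_on_slice[OF mono j] by (auto simp: supp_diff_def m_def)
  then obtain k where "k \<in> {1..I}" "g k x \<in> {hs (j - 1)..<hs j}"
    using eps_eq_along_gap[OF pw_const xy(1) _ xy(2,3) m] by blast
  with xy p_eq show "p \<in> (\<Union>k\<in>{1..I}. ({0<..<Lx} \<inter> g k -` {hs (j - 1)..<hs j}) \<times> {hs (j - 1)..<hs j})"
    by auto
qed

lemma measure_supp_diff_le:
  assumes "\<forall>k\<in>{1..I+1}. \<forall>p\<in>layer Lx H I g k. eps p = c k"
    and g_cont: "\<And>k. k \<in> {1..I} \<Longrightarrow> continuous_on {0..Lx} (g k)"
    and mono: "strict_mono_on {..S} hs" and "hs 0 = -H" "hs S = H" and j: "j \<in> {1..S}"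
  shows "measure lebesgue (supp_diff Lx H hs S eps j)
    \<le> (\<Sum>k\<in>{1..I}. measure lborel ({0<..<Lx} \<inter> g k -` {hs (j - 1)..<hs j})) * (hs j - hs (j - 1))"
proof -
  define base where "base k = {0<..<Lx} \<inter> g k -` {hs (j - 1)..<hs j}" for k
  define box where "box k = base k \<times> {hs (j - 1)..<hs j}" for k
  have base_borel: "base k \<in> sets borel" if "k \<in> {1..I}" for k
    unfolding base_def
    by (intro borel_Int_vimage_if_continuous_on continuous_on_subset[OF g_cont[OF that]]) auto
  then have box_lebesgue: "box k \<in> sets lebesgue" if "k \<in> {1..I}" for k
    using that by (simp add: box_def borel_prod[symmetric])
  have "-H \<le> hs (j - 1)" "hs (j - 1) < hs j" "hs j \<le> H"
    using slab_within_ends[OF mono j] assms(4,5) by simp_all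
  then have "(\<Union>k\<in>{1..I}. box k) \<subseteq> cbox (0, -H) (Lx, H)"
    by (auto simp: box_def base_def cbox_Pair_eq)
  then have "(\<Union>k\<in>{1..I}. box k) \<in> fmeasurable lebesgue"
    using box_lebesgue by (intro fmeasurableI2[OF lmeasurable_cbox]) auto
  then have "measure lebesgue (supp_diff Lx H hs S eps j) \<le> measure lebesgue (\<Union>k\<in>{1..I}. box k)"
    using supp_diff_subset_crossings[OF assms(1) mono assms(4,5) j]
    by (intro measure_le_if_subset_fmeasurable) (simp_all add: box_def base_def)
  also have "\<dots> \<le> (\<Sum>k\<in>{1..I}. measure lebesgue (box k))"
    using box_lebesgue by (intro measure_UNION_le) auto
  also have "\<dots> = (\<Sum>k\<in>{1..I}. measure lborel (base k)) * (hs j - hs (j - 1))"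
    using \<open>hs (j - 1) < hs j\<close> base_borel
    by (simp add: box_def measure_lebesgue_Times sum_distrib_right)
  finally show ?thesis by (simp add: base_def)
qed

lemma width_le_hmax:
  "j \<in> {1..S} \<Longrightarrow> hs j - hs (j - 1) \<le> hmax hs S"
  unfolding hmax_def by (intro Max_ge) auto

lemma hmax_pos:
  assumes "strict_mono_on {..S} hs" "S \<ge> 1"
  shows "0 < hmax hs S"
  using slab_within_ends(2)[OF assms(1), of 1] width_le_hmax[of 1 S hs] assms(2) by simp

lemma sum_measure_supp_diff_le:
  assumes pw_const: "\<forall>k\<in>{1..I+1}. \<forall>p\<in>layer Lx H I g k. eps p = c k"
    and g_cont: "\<And>k. k \<in> {1..I} \<Longrightarrow> continuous_on {0..Lx} (g k)" and "0 \<le> Lx"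
    and mono: "strict_mono_on {..S} hs" and ends: "hs 0 = -H" "hs S = H" and "S \<ge> 1"
  shows "(\<Sum>j=1..S. measure lebesgue (supp_diff Lx H hs S eps j)) \<le> real I * Lx * hmax hs S"
proof -
  let ?base = "\<lambda>k j. measure lborel ({0<..<Lx} \<inter> g k -` {hs (j - 1)..<hs j})"
  have slice_le: "measure lebesgue (supp_diff Lx H hs S eps j) \<le> (\<Sum>k\<in>{1..I}. ?base k j) * hmax hs S"
    if "j \<in> {1..S}" for j
  proof -
    have "measure lebesgue (supp_diff Lx H hs S eps j) \<le> (\<Sum>k\<in>{1..I}. ?base k j) * (hs j - hs (j - 1))"
      by (rule measure_supp_diff_le[OF pw_const g_cont mono ends that])
    also have "\<dots> \<le> (\<Sum>k\<in>{1..I}. ?base k j) * hmax hs S"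
      by (intro mult_left_mono width_le_hmax[OF that] sum_nonneg measure_nonneg)
    finally show ?thesis .
  qed
  have crossings_le: "(\<Sum>j=1..S. ?base k j) \<le> Lx" if "k \<in> {1..I}" for k
    using sum_measure_crossings_le[OF g_cont[OF that] \<open>0 \<le> Lx\<close> mono] by simp
  have "(\<Sum>j=1..S. measure lebesgue (supp_diff Lx H hs S eps j))
        \<le> (\<Sum>j=1..S. (\<Sum>k\<in>{1..I}. ?base k j) * hmax hs S)"
    by (intro sum_mono slice_le)
  also have "\<dots> = hmax hs S * (\<Sum>k\<in>{1..I}. \<Sum>j=1..S. ?base k j)"
    by (subst sum.swap) (simp add: sum_distrib_left sum_distrib_right mult.commute)
  also have "\<dots> \<le> hmax hs S * (\<Sum>k\<in>{1..I}. Lx)"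
    using hmax_pos[OF mono \<open>S \<ge> 1\<close>] by (intro mult_left_mono sum_mono crossings_le) simp_all
  finally show ?thesis by (simp add: mult.commute)
qed

theorem lemma5:
  fixes H Lx \<delta> C\<^sub>\<Delta> :: real and I :: nat
    and g g' g'' :: "nat \<Rightarrow> real \<Rightarrow> real"
    and eps :: "real \<times> real \<Rightarrow> complex"
  assumes H_pos: "H > 0" and Lx_pos: "Lx > 0" and I_pos: "I \<ge> 1"
    and C2: "\<And>k x. k \<in> {1..I} \<Longrightarrow> x \<in> {0..Lx} \<Longrightarrow>
                (g k has_real_derivative g' k x) (at x within {0..Lx})"
            "\<And>k x. k \<in> {1..I} \<Longrightarrow> x \<in> {0..Lx} \<Longrightarrow>
                (g' k has_real_derivative g'' k x) (at x within {0..Lx})"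
            "\<And>k. k \<in> {1..I} \<Longrightarrow> continuous_on {0..Lx} (g'' k)"
    and delta_pos: "\<delta> > 0"
    and separated: "\<And>k x. k \<in> {1..I+1} \<Longrightarrow> x \<in> {0..Lx} \<Longrightarrow>
                      gext H I g k x - gext H I g (k - 1) x \<ge> \<delta>"
    and pw_const: "\<exists>c :: nat \<Rightarrow> complex. \<forall>k\<in>{1..I+1}. \<forall>p\<in>layer Lx H I g k. eps p = c k"
    and C_Delta_pos: "C\<^sub>\<Delta> > 0"
  shows "\<exists>C9 > 0. \<forall>(S::nat) (hs::nat \<Rightarrow> real).
           S \<ge> 1 \<and> hs 0 = -H \<and> hs S = H \<and> (\<forall>j\<in>{1..S}. hs (j - 1) < hs j)
           \<and> hmax hs S \<le> C\<^sub>\<Delta> * hmin hs S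
           \<and> (\<forall>k\<in>{1..I}. \<forall>x\<in>{0..Lx}. g' k x = 0 \<longrightarrow> (\<exists>j\<in>{0..S}. g k x = hs j))
           \<longrightarrow> (\<Sum>j=1..S. measure lebesgue (supp_diff Lx H hs S eps j)) \<le> C9 * hmax hs S"
proof (intro exI[of _ "real I * Lx + 1"] conjI allI impI)
  show "real I * Lx + 1 > 0" using Lx_pos by (simp add: add_nonneg_pos)
  fix S :: nat and hs :: "nat \<Rightarrow> real"
  assume partition: "S \<ge> 1 \<and> hs 0 = -H \<and> hs S = H \<and> (\<forall>j\<in>{1..S}. hs (j - 1) < hs j)
           \<and> hmax hs S \<le> C\<^sub>\<Delta> * hmin hs S
           \<and> (\<forall>k\<in>{1..I}. \<forall>x\<in>{0..Lx}. g' k x = 0 \<longrightarrow> (\<exists>j\<in>{0..S}. g k x = hs j))"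
  then have mono: "strict_mono_on {..S} hs"
    by (intro strict_mono_on_atMostI) simp
  obtain c where c: "\<forall>k\<in>{1..I+1}. \<forall>p\<in>layer Lx H I g k. eps p = c k"
    using pw_const by blast
  have g_cont: "continuous_on {0..Lx} (g k)" if "k \<in> {1..I}" for k
    using C2(1)[OF that] by (meson DERIV_continuous continuous_on_eq_continuous_within)
  have "(\<Sum>j=1..S. measure lebesgue (supp_diff Lx H hs S eps j)) \<le> real I * Lx * hmax hs S"
    using partition Lx_pos by (intro sum_measure_supp_diff_le[OF c g_cont _ mono]) simp_all
  also have "\<dots> \<le> (real I * Lx + 1) * hmax hs S"
    using hmax_pos[OF mono] partition by (simp add: algebra_simps)
  finally show "(\<Sum>j=1..S. measure lebesgue (supp_diff Lx H hs S eps j)) \<le> (real I * Lx + 1) * hmax hs S" .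
qed

end
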